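(* Let $\Gamma$ be a strongly connected digraph on $[n]$, let $S=S(\Gamma)$ be its total sandpile group, and let $S_i=S_i(\Gamma)$ for $i\in[n]$ be its sandpile groups at the vertices. Then: (1) for every $i$ there is a (canonical) surjection $S_i\to S$; (2) $|S|=\gcd\{|S_i|: i\in[n]\}$; (3) if $G$ is a finite abelian group such that for every $i\in[n]$ there is a surjection $S_i\to G$, then there is a surjection $S\to G$.
   Context: Digraphs may have multiple edges (and loops). $\deg(i,j)$ is the number of edges from $i$ to $j$, and $\mathrm{outdeg}(i)$ is the number of edges leaving $i$. A digraph is strongly connected if there is a directed path from every vertex to every other vertex. The Laplacian $L$ is the $n\times n$ integer matrix with $L_{ij}=-\deg(j,i)$ for $i\ne j$ and $L_{jj}=\mathrm{outdeg}(j)-\deg(j,j)$, so its columns sum to $0$. $L_i$ is the $(n-1)\times(n-1)$ matrix obtained from $L$ by deleting row $i$ and column $i$. The sandpile group at vertex $i$ is $S_i(\Gamma)=\mathbb{Z}^{n-1}/L_i\mathbb{Z}^{n-1}$; it is finite when $\Gamma$ is strongly connected. The total sandpile group is $S(\Gamma)=\mathbb{Z}^n_0/L\mathbb{Z}^n$, where $\mathbb{Z}^n_0$ is the subgroup of $\mathbb{Z}^n$ of vectors with entry sum $0$. *)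

theory Defs
  imports "HOL-Algebra.Coset"
begin

text \<open>A digraph with multiple edges and loops on the vertex set {0..<n} (standing for [n])
  is given by its edge-count function deg, where deg i j is the number of edges from i to j.
  Only the values deg i j with i, j < n are relevant.\<close>

definition outdeg :: "nat \<Rightarrow> (nat \<Rightarrow> nat \<Rightarrow> nat) \<Rightarrow> nat \<Rightarrow> nat" where
  "outdeg n deg i = (\<Sum>j<n. deg i j)"

definition edge_rel :: "nat \<Rightarrow> (nat \<Rightarrow> nat \<Rightarrow> nat) \<Rightarrow> (nat \<times> nat) set" where
  "edge_rel n deg = {(i, j). i < n \<and> j < n \<and> deg i j > 0}"

definition strongly_connected :: "nat \<Rightarrow> (nat \<Rightarrow> nat \<Rightarrow> nat) \<Rightarrow> bool" where
  "strongly_connected n deg \<longleftrightarrow> (\<forall>i<n. \<forall>j<n. (i, j) \<in> (edge_rel n deg)\<^sup>*)"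

definition laplacian :: "nat \<Rightarrow> (nat \<Rightarrow> nat \<Rightarrow> nat) \<Rightarrow> nat \<Rightarrow> nat \<Rightarrow> int" where
  "laplacian n deg i j =
     (if i = j then int (outdeg n deg j) - int (deg j j) else - int (deg j i))"

definition vecs :: "nat set \<Rightarrow> (nat \<Rightarrow> int) set" where
  "vecs A = {v. \<forall>k. k \<notin> A \<longrightarrow> v k = 0}"

definition vec_group :: "(nat \<Rightarrow> int) set \<Rightarrow> (nat \<Rightarrow> int) monoid" where
  "vec_group V = \<lparr>carrier = V, mult = (\<lambda>u v k. u k + v k), one = (\<lambda>k. 0)\<rparr>"

definition lap_apply :: "nat \<Rightarrow> (nat \<Rightarrow> nat \<Rightarrow> nat) \<Rightarrow> (nat \<Rightarrow> int) \<Rightarrow> (nat \<Rightarrow> int)" where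
  "lap_apply n deg x = (\<lambda>k. if k < n then (\<Sum>j<n. laplacian n deg k j * x j) else 0)"

text \<open>Reduced Laplacian L_i (row and column i deleted), acting on Z^([n]-{i}) \<cong> Z^(n-1).\<close>
definition red_lap_apply :: "nat \<Rightarrow> (nat \<Rightarrow> nat \<Rightarrow> nat) \<Rightarrow> nat \<Rightarrow> (nat \<Rightarrow> int) \<Rightarrow> (nat \<Rightarrow> int)" where
  "red_lap_apply n deg i x =
     (\<lambda>k. if k < n \<and> k \<noteq> i then (\<Sum>j\<in>{..<n} - {i}. laplacian n deg k j * x j) else 0)"

definition zero_sum_vecs :: "nat \<Rightarrow> (nat \<Rightarrow> int) set" where
  "zero_sum_vecs n = {v \<in> vecs {..<n}. (\<Sum>k<n. v k) = 0}"

definition total_sandpile :: "nat \<Rightarrow> (nat \<Rightarrow> nat \<Rightarrow> nat) \<Rightarrow> (nat \<Rightarrow> int) set monoid" where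
  "total_sandpile n deg =
     vec_group (zero_sum_vecs n) Mod (lap_apply n deg ` vecs {..<n})"

definition sandpile_at :: "nat \<Rightarrow> (nat \<Rightarrow> nat \<Rightarrow> nat) \<Rightarrow> nat \<Rightarrow> (nat \<Rightarrow> int) set monoid" where
  "sandpile_at n deg i =
     vec_group (vecs ({..<n} - {i})) Mod (red_lap_apply n deg i ` vecs ({..<n} - {i}))"

definition surj_hom :: "('a, 'c) monoid_scheme \<Rightarrow> ('b, 'd) monoid_scheme \<Rightarrow> ('a \<Rightarrow> 'b) \<Rightarrow> bool" where
  "surj_hom G H h \<longleftrightarrow> h \<in> hom G H \<and> h ` carrier G = carrier H"

end

theory Submission
  imports Defs "HOL-Algebra.Multiplicative_Group" "HOL-Computational_Algebra.Primes"
    "Jordan_Normal_Form.Determinant"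
begin

text \<open>Filling in coordinate \<open>i\<close> identifies \<open>\<int>\<^bsup>[n]-{i}\<^esup>\<close> with \<open>\<int>\<^sup>n\<^sub>0\<close>, and under this
  identification \<open>L \<int>\<^sup>n = L\<^sub>i \<int>\<^bsup>n-1\<^esup> + \<int> w\<^sub>i\<close>, where \<open>w\<^sub>i\<close> is column \<open>i\<close> of \<open>L\<close> with row \<open>i\<close>
  deleted. Hence \<open>S\<^sub>i \<rightarrow> S\<close> is onto, with cyclic kernel generated by the class of \<open>w\<^sub>i\<close>. If \<open>\<kappa>\<close> is
  a primitive integer null vector of \<open>L\<close> (one exists because the columns of \<open>L\<close> sum to zero),
  then \<open>\<kappa>\<^sub>i w\<^sub>i \<in> L\<^sub>i \<int>\<^bsup>n-1\<^esup>\<close>, so the kernel orders \<open>m\<^sub>i = |S\<^sub>i| / |S|\<close> divide \<open>\<kappa>\<^sub>i\<close> and have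
  gcd 1; this gives (2).

  For (3), a surjection \<open>S\<^sub>i \<rightarrow> G\<close> induces a homomorphism \<open>S \<rightarrow> G\<close> whose image contains all
  \<open>m\<^sub>i\<close>-th powers. Two such homomorphisms, for exponents \<open>r\<close> and \<open>m\<close>, combine into one for
  \<open>gcd(r, |G|, m\<^bsup>|G|\<^esup>)\<close>; iterating over all \<open>i\<close> drives the exponent down to 1.\<close>

(* Jordan_Normal_Form imports Polynomial, whose order would shadow Coset.order below. *)
hide_const (open) Polynomial.order

section \<open>Subgroups of integer vectors\<close>

definition vec_subgroup :: "(nat \<Rightarrow> int) set \<Rightarrow> bool" where
  "vec_subgroup H \<longleftrightarrow> (\<lambda>k. 0) \<in> H \<and> (\<forall>u\<in>H. \<forall>v\<in>H. (\<lambda>k. u k + v k) \<in> H) \<and> (\<forall>u\<in>H. (\<lambda>k. - u k) \<in> H)"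

lemma vec_group_simps [simp]:
  "carrier (vec_group V) = V"
  "u \<otimes>\<^bsub>vec_group V\<^esub> v = (\<lambda>k. u k + v k)"
  "\<one>\<^bsub>vec_group V\<^esub> = (\<lambda>k. 0)"
  by (simp_all add: vec_group_def)

lemma vec_subgroup_zero: "vec_subgroup H \<Longrightarrow> (\<lambda>k. 0) \<in> H"
  and vec_subgroup_add: "vec_subgroup H \<Longrightarrow> u \<in> H \<Longrightarrow> v \<in> H \<Longrightarrow> (\<lambda>k. u k + v k) \<in> H"
  and vec_subgroup_neg: "vec_subgroup H \<Longrightarrow> u \<in> H \<Longrightarrow> (\<lambda>k. - u k) \<in> H"
  by (simp_all add: vec_subgroup_def)

lemma vec_subgroup_diff: "vec_subgroup H \<Longrightarrow> u \<in> H \<Longrightarrow> v \<in> H \<Longrightarrow> (\<lambda>k. u k - v k) \<in> H"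
  using vec_subgroup_add[of H u "\<lambda>k. - v k"] vec_subgroup_neg[of H v] by simp

lemma vec_subgroup_vecs: "vec_subgroup (vecs A)"
  by (simp add: vec_subgroup_def vecs_def)

lemma vec_subgroup_zero_sum_vecs: "vec_subgroup (zero_sum_vecs n)"
  by (simp add: vec_subgroup_def zero_sum_vecs_def vecs_def sum.distrib sum_negf)

lemma vec_subgroup_additive_image:
  assumes V: "vec_subgroup V"
    and f_add: "\<And>u v. u \<in> V \<Longrightarrow> v \<in> V \<Longrightarrow> f (\<lambda>k. u k + v k) = (\<lambda>k. f u k + f v k)"
  shows "vec_subgroup (f ` V)"
proof -
  have f_zero: "f (\<lambda>k. 0) = (\<lambda>k. 0)"
  proof
    fix k
    have "f (\<lambda>k. 0) k = f (\<lambda>k. 0) k + f (\<lambda>k. 0) k"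
      using fun_cong[OF f_add[OF vec_subgroup_zero[OF V] vec_subgroup_zero[OF V]], of k] by simp
    then show "f (\<lambda>k. 0) k = 0" by simp
  qed
  have f_neg: "f (\<lambda>k. - u k) = (\<lambda>k. - f u k)" if "u \<in> V" for u
  proof
    fix k
    have "f (\<lambda>k. - u k) k + f u k = 0"
      using fun_cong[OF f_add[OF vec_subgroup_neg[OF V that] that], of k] f_zero by simp
    then show "f (\<lambda>k. - u k) k = - f u k" by simp
  qed
  show ?thesis
    unfolding vec_subgroup_def
  proof (intro conjI ballI)
    show "(\<lambda>k. 0) \<in> f ` V" using f_zero by (intro rev_image_eqI[OF vec_subgroup_zero[OF V]]) simp
  next
    fix a b assume "a \<in> f ` V" "b \<in> f ` V"
    then obtain u v where uv: "u \<in> V" "v \<in> V" "a = f u" "b = f v" by blast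
    then show "(\<lambda>k. a k + b k) \<in> f ` V"
      by (intro rev_image_eqI[OF vec_subgroup_add[OF V uv(1,2)]]) (simp add: f_add)
  next
    fix a assume "a \<in> f ` V"
    then obtain u where u: "u \<in> V" "a = f u" by blast
    then show "(\<lambda>k. - a k) \<in> f ` V"
      by (intro rev_image_eqI[OF vec_subgroup_neg[OF V u(1)]]) (simp add: f_neg)
  qed
qed

lemma comm_group_vec_group: "vec_subgroup V \<Longrightarrow> comm_group (vec_group V)"
  by (rule comm_groupI)
    (auto simp: vec_subgroup_def algebra_simps intro!: bexI[of _ "\<lambda>k. - _ k"])

lemma vec_group_inv:
  assumes "vec_subgroup V" "u \<in> V" shows "inv\<^bsub>vec_group V\<^esub> u = (\<lambda>k. - u k)"
proof -
  interpret comm_group "vec_group V" using comm_group_vec_group[OF assms(1)] .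
  show ?thesis using assms by (intro inv_equality) (auto simp: vec_subgroup_neg)
qed

lemma subgroup_vec_group:
  assumes "vec_subgroup V" "vec_subgroup H" "H \<subseteq> V" shows "subgroup H (vec_group V)"
proof -
  interpret comm_group "vec_group V" using comm_group_vec_group[OF assms(1)] .
  show ?thesis
    using assms vec_group_inv[OF assms(1)] vec_subgroup_zero[OF assms(2)]
    by (intro subgroupI) (auto simp: vec_subgroup_add vec_subgroup_neg)
qed

lemma normal_vec_group:
  "vec_subgroup V \<Longrightarrow> vec_subgroup H \<Longrightarrow> H \<subseteq> V \<Longrightarrow> H \<lhd> vec_group V"
  by (rule comm_group.subgroup_imp_normal[OF comm_group_vec_group subgroup_vec_group])

lemma comm_group_vec_group_Mod:
  "vec_subgroup V \<Longrightarrow> vec_subgroup H \<Longrightarrow> H \<subseteq> V \<Longrightarrow> comm_group (vec_group V Mod H)"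
  by (rule comm_group.abelian_FactGroup[OF comm_group_vec_group subgroup_vec_group])

lemma r_coset_vec_group: "H #>\<^bsub>vec_group V\<^esub> x = (\<lambda>h k. h k + x k) ` H"
  by (auto simp: r_coset_def)

lemma r_coset_vec_group_eq_iff:
  assumes "vec_subgroup H"
  shows "H #>\<^bsub>vec_group V\<^esub> x = H #>\<^bsub>vec_group V\<^esub> y \<longleftrightarrow> (\<lambda>k. x k - y k) \<in> H"
proof
  assume "H #>\<^bsub>vec_group V\<^esub> x = H #>\<^bsub>vec_group V\<^esub> y"
  moreover have "x \<in> H #>\<^bsub>vec_group V\<^esub> x"
    unfolding r_coset_vec_group using vec_subgroup_zero[OF assms] by (intro rev_image_eqI) auto
  ultimately obtain h where "h \<in> H" "x = (\<lambda>k. h k + y k)"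
    unfolding r_coset_vec_group by auto
  then show "(\<lambda>k. x k - y k) \<in> H" by simp
next
  assume d: "(\<lambda>k. x k - y k) \<in> H"
  have "(\<lambda>k. h k + x k) \<in> (\<lambda>h k. h k + y k) ` H" if "h \<in> H" for h
    using vec_subgroup_add[OF assms that d] by (intro rev_image_eqI) auto
  moreover have "(\<lambda>k. h k + y k) \<in> (\<lambda>h k. h k + x k) ` H" if "h \<in> H" for h
    using vec_subgroup_diff[OF assms that d] by (intro rev_image_eqI) auto
  ultimately show "H #>\<^bsub>vec_group V\<^esub> x = H #>\<^bsub>vec_group V\<^esub> y"
    unfolding r_coset_vec_group by blast
qed

lemma r_coset_vec_group_eq_self_iff:
  assumes "vec_subgroup H" shows "H #>\<^bsub>vec_group V\<^esub> x = H \<longleftrightarrow> x \<in> H"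
proof -
  have "H #>\<^bsub>vec_group V\<^esub> (\<lambda>k. 0) = H" unfolding r_coset_vec_group by simp
  then show ?thesis using r_coset_vec_group_eq_iff[OF assms, of V x "\<lambda>k. 0"] by simp
qed

lemma vec_group_nat_pow: "w [^]\<^bsub>vec_group V\<^esub> (m::nat) = (\<lambda>k. int m * w k)"
  by (induction m) (simp_all add: algebra_simps)

lemma vec_group_int_pow:
  assumes "vec_subgroup V" "w \<in> V" shows "w [^]\<^bsub>vec_group V\<^esub> (t::int) = (\<lambda>k. t * w k)"
proof (cases "t < 0")
  case True
  interpret comm_group "vec_group V" using comm_group_vec_group[OF assms(1)] .
  have "w [^]\<^bsub>vec_group V\<^esub> nat (- t) \<in> V" using assms(2) nat_pow_closed by simp
  then show ?thesis
    using True by (simp add: int_pow_def2 vec_group_nat_pow vec_group_inv[OF assms(1)])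
next
  case False
  then show ?thesis by (simp add: int_pow_def2 vec_group_nat_pow)
qed

lemma r_coset_int_pow_vec_group_Mod:
  assumes "vec_subgroup V" "vec_subgroup H" "H \<subseteq> V" "w \<in> V"
  shows "(H #>\<^bsub>vec_group V\<^esub> w) [^]\<^bsub>vec_group V Mod H\<^esub> (t::int) = H #>\<^bsub>vec_group V\<^esub> (\<lambda>k. t * w k)"
proof -
  interpret normal H "vec_group V" using normal_vec_group[OF assms(1-3)] .
  have "H #>\<^bsub>vec_group V\<^esub> (w [^]\<^bsub>vec_group V\<^esub> t) = (H #>\<^bsub>vec_group V\<^esub> w) [^]\<^bsub>vec_group V Mod H\<^esub> t"
    using hom_int_pow[OF r_coset_hom_Mod, of w t] assms(4) is_group factorgroup_is_group
    by (simp only: vec_group_simps(1) simp_thms)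
  then show ?thesis by (simp only: vec_group_int_pow[OF assms(1,4)])
qed

section \<open>The Laplacian and the zero-sum lift\<close>

(* The edge-count function is called dg, because deg is a constant of HOL-Algebra. *)

abbreviation vecs_off :: "nat \<Rightarrow> nat \<Rightarrow> (nat \<Rightarrow> int) set" where
  "vecs_off n i \<equiv> vecs ({..<n} - {i})"

abbreviation lap_lattice :: "nat \<Rightarrow> (nat \<Rightarrow> nat \<Rightarrow> nat) \<Rightarrow> (nat \<Rightarrow> int) set" where
  "lap_lattice n dg \<equiv> lap_apply n dg ` vecs {..<n}"

abbreviation red_lap_lattice :: "nat \<Rightarrow> (nat \<Rightarrow> nat \<Rightarrow> nat) \<Rightarrow> nat \<Rightarrow> (nat \<Rightarrow> int) set" where
  "red_lap_lattice n dg i \<equiv> red_lap_apply n dg i ` vecs_off n i"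

lemma laplacian_column_sum:
  assumes "j < n" shows "(\<Sum>k<n. laplacian n dg k j) = 0"
proof -
  have "(\<Sum>k<n. laplacian n dg k j) = laplacian n dg j j + (\<Sum>k\<in>{..<n}-{j}. laplacian n dg k j)"
    using assms by (simp add: sum.remove[of "{..<n}" j])
  also have "(\<Sum>k\<in>{..<n}-{j}. laplacian n dg k j) = - (\<Sum>k\<in>{..<n}-{j}. int (dg j k))"
    by (simp add: laplacian_def sum_negf)
  also have "int (outdeg n dg j) = int (dg j j) + (\<Sum>k\<in>{..<n}-{j}. int (dg j k))"
    using assms by (simp add: outdeg_def sum.remove[of "{..<n}" j])
  ultimately show ?thesis by (simp add: laplacian_def)
qed

lemma sum_lap_apply: "(\<Sum>k<n. lap_apply n dg x k) = 0"
proof -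
  have "(\<Sum>k<n. lap_apply n dg x k) = (\<Sum>k<n. \<Sum>j<n. laplacian n dg k j * x j)"
    by (simp add: lap_apply_def)
  also have "\<dots> = (\<Sum>j<n. (\<Sum>k<n. laplacian n dg k j) * x j)"
    by (subst sum.swap) (simp add: sum_distrib_right)
  finally show ?thesis by (simp add: laplacian_column_sum)
qed

lemma lap_apply_zero_sum: "lap_apply n dg x \<in> zero_sum_vecs n"
  using sum_lap_apply by (simp add: zero_sum_vecs_def vecs_def lap_apply_def)

lemma lap_apply_add: "lap_apply n dg (\<lambda>k. u k + v k) = (\<lambda>k. lap_apply n dg u k + lap_apply n dg v k)"
  by (auto simp: lap_apply_def algebra_simps sum.distrib)

lemma lap_apply_smult: "lap_apply n dg (\<lambda>k. c * u k) = (\<lambda>k. c * lap_apply n dg u k)"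
  by (auto simp: lap_apply_def algebra_simps sum_distrib_left)

lemma red_lap_apply_add:
  "red_lap_apply n dg i (\<lambda>k. u k + v k) = (\<lambda>k. red_lap_apply n dg i u k + red_lap_apply n dg i v k)"
  by (auto simp: red_lap_apply_def algebra_simps sum.distrib)

lemma red_lap_apply_in_lattice: "red_lap_apply n dg i y \<in> red_lap_lattice n dg i"
proof (rule rev_image_eqI)
  show "(\<lambda>j. if j \<in> {..<n} - {i} then y j else 0) \<in> vecs_off n i" by (simp add: vecs_def)
qed (auto simp: red_lap_apply_def intro!: sum.cong)

lemma vec_subgroup_lap_lattice: "vec_subgroup (lap_lattice n dg)"
  by (rule vec_subgroup_additive_image[OF vec_subgroup_vecs lap_apply_add])

lemma vec_subgroup_red_lap_lattice: "vec_subgroup (red_lap_lattice n dg i)"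
  by (rule vec_subgroup_additive_image[OF vec_subgroup_vecs red_lap_apply_add])

lemma lap_lattice_subset: "lap_lattice n dg \<subseteq> zero_sum_vecs n"
  using lap_apply_zero_sum by blast

lemma red_lap_lattice_subset: "red_lap_lattice n dg i \<subseteq> vecs_off n i"
  by (auto simp: red_lap_apply_def vecs_def)

lemma comm_group_total_sandpile: "comm_group (total_sandpile n dg)"
  unfolding total_sandpile_def
  by (rule comm_group_vec_group_Mod[OF vec_subgroup_zero_sum_vecs vec_subgroup_lap_lattice lap_lattice_subset])

lemma comm_group_sandpile_at: "comm_group (sandpile_at n dg i)"
  unfolding sandpile_at_def
  by (rule comm_group_vec_group_Mod[OF vec_subgroup_vecs vec_subgroup_red_lap_lattice red_lap_lattice_subset])

definition zero_sum_lift :: "nat \<Rightarrow> nat \<Rightarrow> (nat \<Rightarrow> int) \<Rightarrow> (nat \<Rightarrow> int)" where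
  "zero_sum_lift n i x = (\<lambda>k. if k = i then - (\<Sum>j<n. x j) else x k)"

definition lap_column :: "nat \<Rightarrow> (nat \<Rightarrow> nat \<Rightarrow> nat) \<Rightarrow> nat \<Rightarrow> (nat \<Rightarrow> int)" where
  "lap_column n dg i = (\<lambda>k. if k < n \<and> k \<noteq> i then laplacian n dg k i else 0)"

lemma lap_column_in_vecs_off: "lap_column n dg i \<in> vecs_off n i"
  by (simp add: lap_column_def vecs_def)

lemma zero_sum_lift_add: "zero_sum_lift n i (\<lambda>k. u k + v k) = (\<lambda>k. zero_sum_lift n i u k + zero_sum_lift n i v k)"
  by (auto simp: zero_sum_lift_def sum.distrib)

lemma zero_sum_lift_in_zero_sum_vecs:
  assumes "i < n" "x \<in> vecs_off n i" shows "zero_sum_lift n i x \<in> zero_sum_vecs n"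
proof -
  have "(\<Sum>k<n. zero_sum_lift n i x k) = zero_sum_lift n i x i + (\<Sum>k\<in>{..<n}-{i}. x k)"
    using assms(1) by (simp add: sum.remove[of "{..<n}" i] zero_sum_lift_def)
  also have "(\<Sum>k\<in>{..<n}-{i}. x k) = (\<Sum>k<n. x k)"
    using assms by (simp add: sum.remove[of "{..<n}" i] vecs_def)
  finally show ?thesis
    using assms by (auto simp: zero_sum_vecs_def vecs_def zero_sum_lift_def)
qed

lemma inj_on_zero_sum_lift: "inj_on (zero_sum_lift n i) (vecs_off n i)"
proof (rule inj_onI, rule ext)
  fix x y k assume "x \<in> vecs_off n i" "y \<in> vecs_off n i" "zero_sum_lift n i x = zero_sum_lift n i y"
  then show "x k = y k"
    by (cases "k = i") (auto simp: vecs_def zero_sum_lift_def dest: fun_cong[of _ _ k])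
qed

lemma zero_sum_lift_image: assumes "i < n" shows "zero_sum_lift n i ` vecs_off n i = zero_sum_vecs n"
proof (intro equalityI subsetI)
  fix a assume a: "a \<in> zero_sum_vecs n"
  let ?x = "\<lambda>k. if k = i then 0 else a k"
  have "(\<Sum>j<n. a j) = a i + (\<Sum>j\<in>{..<n}-{i}. a j)"
    using assms by (simp add: sum.remove[of "{..<n}" i])
  moreover have "(\<Sum>j<n. ?x j) = (\<Sum>j\<in>{..<n}-{i}. a j)"
    using assms by (simp add: sum.remove[of "{..<n}" i])
  ultimately have "(\<Sum>j<n. ?x j) = (\<Sum>j<n. a j) - a i" by simp
  then have "zero_sum_lift n i ?x = a"
    using a by (auto simp: zero_sum_lift_def zero_sum_vecs_def)
  moreover have "?x \<in> vecs_off n i" using a by (simp add: zero_sum_vecs_def vecs_def)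
  ultimately show "a \<in> zero_sum_lift n i ` vecs_off n i" by (rule image_eqI[OF sym])
qed (use zero_sum_lift_in_zero_sum_vecs[OF assms] in blast)

lemma red_lap_apply_plus_column_in_vecs_off:
  "(\<lambda>k. red_lap_apply n dg i y k + t * lap_column n dg i k) \<in> vecs_off n i"
  by (simp add: vecs_def red_lap_apply_def lap_column_def)

lemma zero_sum_lift_zero: "zero_sum_lift n i (\<lambda>k. 0) = (\<lambda>k. 0)"
  by (rule ext) (simp add: zero_sum_lift_def)

text \<open>Expanding \<open>L y\<close> along column \<open>i\<close>: the remaining columns give \<open>L\<^sub>i y\<close>, and coordinate \<open>i\<close>
  is forced by the column sums of \<open>L\<close> being zero.\<close>
lemma lap_apply_eq_zero_sum_lift:
  assumes "i < n"
  shows "lap_apply n dg y =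
    zero_sum_lift n i (\<lambda>k. red_lap_apply n dg i y k + y i * lap_column n dg i k)"
    (is "_ = zero_sum_lift n i ?z")
proof -
  have off_i: "?z k = lap_apply n dg y k" if "k < n" "k \<noteq> i" for k
  proof -
    have "lap_apply n dg y k = (\<Sum>j<n. laplacian n dg k j * y j)"
      using that by (simp add: lap_apply_def)
    also have "\<dots> = laplacian n dg k i * y i + (\<Sum>j\<in>{..<n}-{i}. laplacian n dg k j * y j)"
      using assms by (simp add: sum.remove[of "{..<n}" i])
    finally have "lap_apply n dg y k = laplacian n dg k i * y i + (\<Sum>j\<in>{..<n}-{i}. laplacian n dg k j * y j)" .
    then show ?thesis using that by (simp add: red_lap_apply_def lap_column_def)
  qed
  have z_i: "?z i = 0" by (simp add: red_lap_apply_def lap_column_def)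
  have "(\<Sum>j<n. ?z j) = (\<Sum>j\<in>{..<n}-{i}. ?z j)"
    using assms z_i by (simp add: sum.remove[of "{..<n}" i])
  also have "\<dots> = (\<Sum>j\<in>{..<n}-{i}. lap_apply n dg y j)"
    using off_i by (intro sum.cong) auto
  also have "\<dots> = - lap_apply n dg y i"
    using sum_lap_apply[of n dg y] assms by (simp add: sum.remove[of "{..<n}" i])
  finally have at_i: "zero_sum_lift n i ?z i = lap_apply n dg y i"
    by (simp add: zero_sum_lift_def)
  have outside: "zero_sum_lift n i ?z k = 0" "lap_apply n dg y k = 0" if "\<not> k < n" for k
    using that assms by (auto simp: zero_sum_lift_def red_lap_apply_def lap_column_def lap_apply_def)
  show ?thesis
  proof
    fix k show "lap_apply n dg y k = zero_sum_lift n i ?z k"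
      using off_i[of k] at_i outside[of k] by (cases "k = i"; cases "k < n") (simp_all add: zero_sum_lift_def)
  qed
qed

lemma zero_sum_lift_in_lap_latticeD:
  assumes "i < n" "x \<in> vecs_off n i" "zero_sum_lift n i x \<in> lap_lattice n dg"
  obtains t where "(\<lambda>k. x k - t * lap_column n dg i k) \<in> red_lap_lattice n dg i"
proof -
  obtain y where "zero_sum_lift n i x = lap_apply n dg y" using assms(3) by blast
  also have "\<dots> = zero_sum_lift n i (\<lambda>k. red_lap_apply n dg i y k + y i * lap_column n dg i k)"
    by (rule lap_apply_eq_zero_sum_lift[OF assms(1)])
  finally have "x = (\<lambda>k. red_lap_apply n dg i y k + y i * lap_column n dg i k)"
    using inj_onD[OF inj_on_zero_sum_lift _ assms(2) red_lap_apply_plus_column_in_vecs_off] by blast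
  then have "(\<lambda>k. x k - y i * lap_column n dg i k) = red_lap_apply n dg i y" by simp
  then show thesis using that red_lap_apply_in_lattice by metis
qed

lemma lap_kernel_column_in_red_lap_lattice:
  assumes "i < n" "lap_apply n dg \<kappa> = (\<lambda>k. 0)"
  shows "(\<lambda>k. \<kappa> i * lap_column n dg i k) \<in> red_lap_lattice n dg i"
proof -
  have "zero_sum_lift n i (\<lambda>k. red_lap_apply n dg i \<kappa> k + \<kappa> i * lap_column n dg i k)
      = lap_apply n dg \<kappa>"
    by (rule lap_apply_eq_zero_sum_lift[OF assms(1), symmetric])
  also have "\<dots> = zero_sum_lift n i (\<lambda>k. 0)"
    using assms(2) zero_sum_lift_zero by simp
  finally have "(\<lambda>k. red_lap_apply n dg i \<kappa> k + \<kappa> i * lap_column n dg i k) = (\<lambda>k. 0)"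
    using inj_onD[OF inj_on_zero_sum_lift _ red_lap_apply_plus_column_in_vecs_off
        vec_subgroup_zero[OF vec_subgroup_vecs]] by blast
  then have "(\<lambda>k. \<kappa> i * lap_column n dg i k) = (\<lambda>k. - red_lap_apply n dg i \<kappa> k)"
    by (metis add_eq_0_iff add.commute)
  then show ?thesis
    using vec_subgroup_neg[OF vec_subgroup_red_lap_lattice red_lap_apply_in_lattice] by simp
qed

lemma lap_apply_cong: "(\<And>k. k < n \<Longrightarrow> x k = y k) \<Longrightarrow> lap_apply n dg x = lap_apply n dg y"
  by (auto simp: lap_apply_def intro!: sum.cong)

text \<open>The all-ones vector is a left null vector of \<open>L\<close>, so \<open>det L = 0\<close> and \<open>L\<close> has a
  nonzero integer null vector.\<close>
lemma lap_apply_singular: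
  assumes "n \<ge> 1"
  obtains \<kappa> k where "lap_apply n dg \<kappa> = (\<lambda>k. 0)" "\<kappa> k \<noteq> 0" "k < n"
proof -
  define L :: "int mat" where "L = mat n n (\<lambda>(r, c). laplacian n dg r c)"
  have L: "L \<in> carrier_mat n n" by (simp add: L_def)
  have "transpose_mat L *\<^sub>v vec n (\<lambda>_. 1) = 0\<^sub>v n"
    by (rule eq_vecI) (simp_all add: L_def scalar_prod_def atLeast0LessThan laplacian_column_sum)
  moreover have "vec n (\<lambda>_. 1) \<noteq> (0\<^sub>v n :: int vec)"
  proof
    assume "vec n (\<lambda>_. 1) = (0\<^sub>v n :: int vec)"
    then have "vec n (\<lambda>_. 1) $ 0 = (0\<^sub>v n :: int vec) $ 0" by simp
    then show False using assms by simp
  qed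
  moreover have "transpose_mat L \<in> carrier_mat n n" using L by simp
  ultimately have "det (transpose_mat L) = 0"
    using det_0_iff_vec_prod_zero[of "transpose_mat L" n] vec_carrier by blast
  then have "det L = 0" using det_transpose[OF L] by simp
  then obtain v where v: "v \<in> carrier_vec n" "v \<noteq> 0\<^sub>v n" "L *\<^sub>v v = 0\<^sub>v n"
    using det_0_iff_vec_prod_zero[OF L] by blast
  define \<kappa> where "\<kappa> k = (if k < n then v $ k else 0)" for k
  have "lap_apply n dg \<kappa> k = 0" for k
  proof (cases "k < n")
    case True
    then have "lap_apply n dg \<kappa> k = (L *\<^sub>v v) $ k"
      using v(1) by (simp add: lap_apply_def L_def \<kappa>_def scalar_prod_def atLeast0LessThan)
    then show ?thesis using v(3) True by simp
  qed (simp add: lap_apply_def)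
  moreover obtain k where "k < n" "v $ k \<noteq> 0"
  proof (rule ccontr)
    assume "\<not> thesis"
    then have "v = 0\<^sub>v n" using v(1) that by (intro eq_vecI) auto
    then show False using v(2) by simp
  qed
  ultimately show thesis using that[of \<kappa> k] by (auto simp: \<kappa>_def)
qed

lemma primitive_part_exists:
  fixes v :: "'a \<Rightarrow> int"
  assumes "k \<in> A" "v k \<noteq> 0"
  obtains c w where "c \<noteq> 0" "\<And>j. j \<in> A \<Longrightarrow> v j = c * w j"
    "\<And>d. (\<And>j. j \<in> A \<Longrightarrow> d dvd w j) \<Longrightarrow> is_unit d"
proof
  define c where "c = Gcd (v ` A)"
  have c_dvd: "c dvd v j" if "j \<in> A" for j using that by (simp add: c_def)
  show c0: "c \<noteq> 0" using c_dvd[OF assms(1)] assms(2) by auto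
  show v_eq: "v j = c * (v j div c)" if "j \<in> A" for j using c_dvd[OF that] by simp
  fix d assume "\<And>j. j \<in> A \<Longrightarrow> d dvd v j div c"
  then have dvd_all: "d * c dvd v j" if "j \<in> A" for j
    using v_eq[OF that] that by (metis mult.commute mult_dvd_mono dvd_refl)
  have "d * c dvd Gcd (v ` A)" using dvd_all by (intro Gcd_greatest) blast
  then have "d * c dvd 1 * c" by (simp add: c_def)
  then show "is_unit d" using c0 by (simp only: dvd_mult_cancel_right) simp
qed

lemma primitive_lap_kernel_vector:
  assumes "n \<ge> 1"
  obtains \<kappa> where "lap_apply n dg \<kappa> = (\<lambda>k. 0)" "\<And>d. (\<And>k. k < n \<Longrightarrow> d dvd \<kappa> k) \<Longrightarrow> is_unit d"
proof -
  obtain \<kappa>0 k where \<kappa>0: "lap_apply n dg \<kappa>0 = (\<lambda>k. 0)" "\<kappa>0 k \<noteq> 0" "k < n"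
    using lap_apply_singular[OF assms] by blast
  obtain c \<kappa> where c: "c \<noteq> 0" "\<And>j. j \<in> {..<n} \<Longrightarrow> \<kappa>0 j = c * \<kappa> j"
    and primitive: "\<And>d. (\<And>j. j \<in> {..<n} \<Longrightarrow> d dvd \<kappa> j) \<Longrightarrow> is_unit d"
    using primitive_part_exists[of k "{..<n}" \<kappa>0] \<kappa>0(2,3) by blast
  have "(\<lambda>k. c * lap_apply n dg \<kappa> k) = lap_apply n dg \<kappa>0"
    using c(2) by (simp add: lap_apply_smult[symmetric] cong: lap_apply_cong)
  then have "lap_apply n dg \<kappa> = (\<lambda>k. 0)" using \<kappa>0(1) c(1) by (simp add: fun_eq_iff)
  with primitive show thesis using that by auto
qed

section \<open>The projection of \<open>S\<^sub>i\<close> onto \<open>S\<close>\<close>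

lemma (in group_hom) the_elem_image_r_coset:
  assumes "subgroup N G" "N \<subseteq> kernel G H h" "x \<in> carrier G"
  shows "the_elem (h ` (N #>\<^bsub>G\<^esub> x)) = h x"
proof -
  have "h (n \<otimes>\<^bsub>G\<^esub> x) = h x" if "n \<in> N" for n
    using that assms subgroup.subset[OF assms(1)] by (auto simp: kernel_def)
  then have "h ` (N #>\<^bsub>G\<^esub> x) = {h x}"
    using G.rcos_self[OF assms(3,1)] unfolding r_coset_def by blast
  then show ?thesis by simp
qed

lemma (in group_hom) FactGroup_induced_hom:
  assumes "N \<lhd> G" "N \<subseteq> kernel G H h"
  shows "(\<lambda>X. the_elem (h ` X)) \<in> hom (G Mod N) H"
proof (rule homI)
  interpret normal N G by fact
  note coset_value = the_elem_image_r_coset[OF is_subgroup assms(2)]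
  fix X Y assume "X \<in> carrier (G Mod N)" "Y \<in> carrier (G Mod N)"
  then obtain x y where xy: "x \<in> carrier G" "X = N #>\<^bsub>G\<^esub> x" "y \<in> carrier G" "Y = N #>\<^bsub>G\<^esub> y"
    by (auto simp: carrier_FactGroup)
  then show "the_elem (h ` X) \<in> carrier H" using coset_value by simp
  show "the_elem (h ` (X \<otimes>\<^bsub>G Mod N\<^esub> Y)) = the_elem (h ` X) \<otimes>\<^bsub>H\<^esub> the_elem (h ` Y)"
    using xy coset_value by (simp add: rcos_sum)
qed

lemma (in group_hom) order_eq_order_mult_card_kernel:
  assumes "h ` carrier G = carrier H"
  shows "order G = order H * card (kernel G H h)"
proof -
  have "G Mod kernel G H h \<cong> H" using FactGroup_iso assms by simp
  then have "card (rcosets\<^bsub>G\<^esub> kernel G H h) = order H"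
    using iso_same_card unfolding Coset.order_def FactGroup_def by fastforce
  then show ?thesis using G.lagrange[OF subgroup_kernel] by simp
qed

definition sandpile_lift :: "nat \<Rightarrow> (nat \<Rightarrow> nat \<Rightarrow> nat) \<Rightarrow> nat \<Rightarrow> (nat \<Rightarrow> int) \<Rightarrow> (nat \<Rightarrow> int) set" where
  "sandpile_lift n dg i x = lap_lattice n dg #>\<^bsub>vec_group (zero_sum_vecs n)\<^esub> zero_sum_lift n i x"

definition sandpile_proj :: "nat \<Rightarrow> (nat \<Rightarrow> nat \<Rightarrow> nat) \<Rightarrow> nat \<Rightarrow> (nat \<Rightarrow> int) set \<Rightarrow> (nat \<Rightarrow> int) set" where
  "sandpile_proj n dg i X = the_elem (sandpile_lift n dg i ` X)"

lemma sandpile_lift_eq_one_iff: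
  assumes "i < n" "x \<in> vecs_off n i"
  shows "sandpile_lift n dg i x = \<one>\<^bsub>total_sandpile n dg\<^esub> \<longleftrightarrow> zero_sum_lift n i x \<in> lap_lattice n dg"
  unfolding sandpile_lift_def total_sandpile_def one_FactGroup
  by (rule r_coset_vec_group_eq_self_iff[OF vec_subgroup_lap_lattice])

lemma group_hom_sandpile_lift:
  assumes "i < n"
  shows "group_hom (vec_group (vecs_off n i)) (total_sandpile n dg) (sandpile_lift n dg i)"
proof -
  have "zero_sum_lift n i \<in> hom (vec_group (vecs_off n i)) (vec_group (zero_sum_vecs n))"
    using zero_sum_lift_in_zero_sum_vecs[OF assms] by (intro homI) (simp_all add: zero_sum_lift_add)
  from hom_compose[OF this normal.r_coset_hom_Mod[OF
        normal_vec_group[OF vec_subgroup_zero_sum_vecs vec_subgroup_lap_lattice lap_lattice_subset]]]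
  have "sandpile_lift n dg i \<in> hom (vec_group (vecs_off n i)) (total_sandpile n dg)"
    by (simp add: sandpile_lift_def[abs_def] total_sandpile_def o_def)
  then show ?thesis
    using comm_group_vec_group[OF vec_subgroup_vecs] comm_group_total_sandpile
    by (simp add: group_hom_def group_hom_axioms_def comm_group_def)
qed

lemma red_lap_lattice_subset_kernel:
  assumes "i < n"
  shows "red_lap_lattice n dg i \<subseteq> kernel (vec_group (vecs_off n i)) (total_sandpile n dg) (sandpile_lift n dg i)"
proof
  fix r assume "r \<in> red_lap_lattice n dg i"
  then obtain z where z: "z \<in> vecs_off n i" "r = red_lap_apply n dg i z" by blast
  have "zero_sum_lift n i r = lap_apply n dg z"
    using lap_apply_eq_zero_sum_lift[OF assms, of dg z] z by (simp add: vecs_def)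
  moreover have "z \<in> vecs {..<n}" using z(1) by (simp add: vecs_def)
  ultimately have "zero_sum_lift n i r \<in> lap_lattice n dg" by (simp add: image_eqI)
  moreover have "r \<in> vecs_off n i" using z red_lap_lattice_subset by blast
  ultimately show "r \<in> kernel (vec_group (vecs_off n i)) (total_sandpile n dg) (sandpile_lift n dg i)"
    using sandpile_lift_eq_one_iff[OF assms] by (simp add: kernel_def)
qed

lemma sandpile_proj_r_coset:
  assumes "i < n" "x \<in> vecs_off n i"
  shows "sandpile_proj n dg i (red_lap_lattice n dg i #>\<^bsub>vec_group (vecs_off n i)\<^esub> x) = sandpile_lift n dg i x"
  unfolding sandpile_proj_def
  using group_hom.the_elem_image_r_coset[OF group_hom_sandpile_lift[OF assms(1)]
      subgroup_vec_group[OF vec_subgroup_vecs vec_subgroup_red_lap_lattice red_lap_lattice_subset]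
      red_lap_lattice_subset_kernel[OF assms(1)]] assms(2)
  by simp

lemma surj_hom_sandpile_proj:
  assumes "i < n"
  shows "surj_hom (sandpile_at n dg i) (total_sandpile n dg) (sandpile_proj n dg i)"
proof -
  have "sandpile_proj n dg i \<in> hom (sandpile_at n dg i) (total_sandpile n dg)"
    unfolding sandpile_proj_def[abs_def] sandpile_at_def
    by (rule group_hom.FactGroup_induced_hom[OF group_hom_sandpile_lift[OF assms]
          normal_vec_group[OF vec_subgroup_vecs vec_subgroup_red_lap_lattice red_lap_lattice_subset]
          red_lap_lattice_subset_kernel[OF assms]])
  moreover have "sandpile_proj n dg i ` carrier (sandpile_at n dg i) = sandpile_lift n dg i ` vecs_off n i"
    using sandpile_proj_r_coset[OF assms] by (force simp: sandpile_at_def carrier_FactGroup)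
  moreover have "sandpile_lift n dg i ` vecs_off n i = carrier (total_sandpile n dg)"
    using zero_sum_lift_image[OF assms]
    by (simp add: sandpile_lift_def[abs_def] total_sandpile_def carrier_FactGroup image_image[symmetric])
  ultimately show ?thesis by (simp add: surj_hom_def)
qed

lemma group_hom_sandpile_proj:
  assumes "i < n"
  shows "group_hom (sandpile_at n dg i) (total_sandpile n dg) (sandpile_proj n dg i)"
  using surj_hom_sandpile_proj[OF assms] comm_group_sandpile_at comm_group_total_sandpile
  by (simp add: surj_hom_def group_hom_def group_hom_axioms_def comm_group_def)

abbreviation proj_kernel_card :: "nat \<Rightarrow> (nat \<Rightarrow> nat \<Rightarrow> nat) \<Rightarrow> nat \<Rightarrow> nat" where
  "proj_kernel_card n dg i \<equiv> card (kernel (sandpile_at n dg i) (total_sandpile n dg) (sandpile_proj n dg i))"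

lemma order_sandpile_at:
  assumes "i < n"
  shows "order (sandpile_at n dg i) = order (total_sandpile n dg) * proj_kernel_card n dg i"
  using group_hom.order_eq_order_mult_card_kernel[OF group_hom_sandpile_proj[OF assms]]
    surj_hom_sandpile_proj[OF assms] by (simp add: surj_hom_def)

lemma kernel_sandpile_proj:
  assumes "i < n"
  shows "kernel (sandpile_at n dg i) (total_sandpile n dg) (sandpile_proj n dg i)
    = generate (sandpile_at n dg i) {red_lap_lattice n dg i #>\<^bsub>vec_group (vecs_off n i)\<^esub> lap_column n dg i}"
    (is "?ker = generate ?S {?a}")
proof -
  let ?R = "red_lap_lattice n dg i"
  interpret S: comm_group ?S by (rule comm_group_sandpile_at)
  interpret group_hom ?S "total_sandpile n dg" "sandpile_proj n dg i"
    by (rule group_hom_sandpile_proj[OF assms])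
  have a: "?a \<in> carrier ?S"
    using lap_column_in_vecs_off by (auto simp: sandpile_at_def carrier_FactGroup)
  have pow_a: "?a [^]\<^bsub>?S\<^esub> t = ?R #>\<^bsub>vec_group (vecs_off n i)\<^esub> (\<lambda>k. t * lap_column n dg i k)" for t :: int
    unfolding sandpile_at_def
    by (rule r_coset_int_pow_vec_group_Mod[OF vec_subgroup_vecs vec_subgroup_red_lap_lattice
          red_lap_lattice_subset lap_column_in_vecs_off])
  have "zero_sum_lift n i (lap_column n dg i) = lap_apply n dg (\<lambda>k. if k = i then 1 else 0)"
  proof -
    have "red_lap_apply n dg i (\<lambda>k. if k = i then 1 else 0) = (\<lambda>k. 0)"
      by (auto simp: red_lap_apply_def intro!: sum.neutral)
    then show ?thesis
      using lap_apply_eq_zero_sum_lift[OF assms, of dg "\<lambda>k. if k = i then 1 else 0"] by simp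
  qed
  moreover have "(\<lambda>k. if k = i then 1 else 0) \<in> vecs {..<n}" using assms by (simp add: vecs_def)
  ultimately have "zero_sum_lift n i (lap_column n dg i) \<in> lap_lattice n dg" by (simp add: image_eqI)
  then have "?a \<in> ?ker"
    using a sandpile_proj_r_coset[OF assms lap_column_in_vecs_off]
      sandpile_lift_eq_one_iff[OF assms lap_column_in_vecs_off] by (simp add: kernel_def)
  then have "generate ?S {?a} \<subseteq> ?ker"
    by (intro S.generate_subgroup_incl subgroup_kernel) simp
  moreover have "?ker \<subseteq> generate ?S {?a}"
  proof
    fix X assume "X \<in> ?ker"
    then obtain x where x: "x \<in> vecs_off n i" "X = ?R #>\<^bsub>vec_group (vecs_off n i)\<^esub> x"
      "sandpile_proj n dg i X = \<one>\<^bsub>total_sandpile n dg\<^esub>"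
      by (auto simp: kernel_def sandpile_at_def carrier_FactGroup)
    then have "zero_sum_lift n i x \<in> lap_lattice n dg"
      using sandpile_proj_r_coset[OF assms] sandpile_lift_eq_one_iff[OF assms] by simp
    then obtain t where "(\<lambda>k. x k - t * lap_column n dg i k) \<in> ?R"
      using zero_sum_lift_in_lap_latticeD[OF assms x(1)] by blast
    then have "X = ?a [^]\<^bsub>?S\<^esub> t"
      using x(2) pow_a r_coset_vec_group_eq_iff[OF vec_subgroup_red_lap_lattice] by simp
    then show "X \<in> generate ?S {?a}" using S.generate_pow[OF a] by blast
  qed
  ultimately show ?thesis by blast
qed

lemma card_kernel_sandpile_proj_dvd:
  assumes "i < n" "lap_apply n dg \<kappa> = (\<lambda>k. 0)"
  shows "int (proj_kernel_card n dg i) dvd \<kappa> i"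
proof -
  let ?S = "sandpile_at n dg i"
  let ?R = "red_lap_lattice n dg i"
  let ?a = "?R #>\<^bsub>vec_group (vecs_off n i)\<^esub> lap_column n dg i"
  interpret S: comm_group ?S by (rule comm_group_sandpile_at)
  have a: "?a \<in> carrier ?S"
    using lap_column_in_vecs_off by (auto simp: sandpile_at_def carrier_FactGroup)
  have "?a [^]\<^bsub>?S\<^esub> \<kappa> i = ?R #>\<^bsub>vec_group (vecs_off n i)\<^esub> (\<lambda>k. \<kappa> i * lap_column n dg i k)"
    unfolding sandpile_at_def
    by (rule r_coset_int_pow_vec_group_Mod[OF vec_subgroup_vecs vec_subgroup_red_lap_lattice
          red_lap_lattice_subset lap_column_in_vecs_off])
  also have "\<dots> = \<one>\<^bsub>?S\<^esub>"
    using r_coset_vec_group_eq_self_iff[OF vec_subgroup_red_lap_lattice]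
      lap_kernel_column_in_red_lap_lattice[OF assms]
    by (simp add: sandpile_at_def)
  finally have "int (S.ord ?a) dvd \<kappa> i" using S.int_pow_eq_id[OF a] by blast
  then show ?thesis using kernel_sandpile_proj[OF assms(1)] S.generate_pow_card[OF a] by simp
qed

lemma Gcd_proj_kernel_card:
  assumes "n \<ge> 1" shows "Gcd (proj_kernel_card n dg ` {..<n}) = 1"
proof -
  obtain \<kappa> where \<kappa>: "lap_apply n dg \<kappa> = (\<lambda>k. 0)" "\<And>d. (\<And>k. k < n \<Longrightarrow> d dvd \<kappa> k) \<Longrightarrow> is_unit d"
    using primitive_lap_kernel_vector[OF assms] by blast
  have "int (Gcd (proj_kernel_card n dg ` {..<n})) dvd \<kappa> k" if "k < n" for k
  proof -
    have "int (Gcd (proj_kernel_card n dg ` {..<n})) dvd int (proj_kernel_card n dg k)"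
      using that by (simp add: Gcd_dvd)
    then show ?thesis using card_kernel_sandpile_proj_dvd[OF that \<kappa>(1)] by (rule dvd_trans)
  qed
  then show ?thesis using \<kappa>(2) by fastforce
qed

lemma Gcd_order_sandpile_at:
  assumes "n \<ge> 1"
  shows "Gcd ((\<lambda>i. order (sandpile_at n dg i)) ` {..<n}) = order (total_sandpile n dg)"
proof -
  have orders: "(\<lambda>i. order (sandpile_at n dg i)) ` {..<n}
      = (*) (order (total_sandpile n dg)) ` proj_kernel_card n dg ` {..<n}"
    using order_sandpile_at by (auto simp: image_image intro!: image_cong)
  show ?thesis unfolding orders Gcd_mult Gcd_proj_kernel_card[OF assms] by simp
qed

section \<open>A congruence for combining exponents\<close>

text \<open>If \<open>p \<mid> m\<close> then the full \<open>p\<close>-part \<open>p\<^sup>k\<close> of \<open>g\<close> divides \<open>m\<^sup>g\<close>, since \<open>p\<^sup>k \<le> g\<close> forces \<open>k \<le> g\<close>.\<close>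
lemma prime_dvd_imp_not_dvd_div_gcd_power:
  fixes g m p :: nat
  assumes "g > 0" "prime p" "p dvd m"
  shows "\<not> p dvd g div gcd g (m ^ g)"
proof
  let ?h = "gcd g (m ^ g)"
  let ?k = "multiplicity p g"
  assume "p dvd g div ?h"
  have pk: "p ^ ?k dvd g" by (rule multiplicity_dvd)
  have "?k < 2 ^ ?k" by (rule less_exp)
  also have "\<dots> \<le> p ^ ?k" using prime_ge_2_nat[OF assms(2)] by (simp add: power_mono)
  also have "\<dots> \<le> g" using pk assms(1) by (rule dvd_imp_le)
  finally have "p ^ ?k dvd p ^ g" by (simp add: le_imp_power_dvd)
  also have "p ^ g dvd m ^ g" using assms(3) by (rule dvd_power_same)
  finally have "p ^ ?k dvd ?h" using pk by simp
  with \<open>p dvd g div ?h\<close> have "p * p ^ ?k dvd g div ?h * ?h" by (rule mult_dvd_mono)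
  then have "p ^ Suc ?k dvd g" by simp
  then show False
    using multiplicity_geI[of g p "Suc ?k"] assms(1,2) prime_gt_1_nat[OF assms(2)] by simp
qed

lemma coprime_if_no_common_prime:
  fixes a b :: nat
  assumes "\<And>p. prime p \<Longrightarrow> p dvd a \<Longrightarrow> p dvd b \<Longrightarrow> False"
  shows "coprime a b"
proof (rule ccontr)
  assume "\<not> coprime a b"
  then obtain p where "prime p" "p dvd gcd a b"
    using prime_factor_nat by (metis coprime_iff_gcd_eq_1)
  then show False using assms by auto
qed

lemma coprime_div_gcd_power:
  fixes g m :: nat
  assumes "g > 0"
  shows "coprime (g div gcd g (m ^ g)) m" "coprime (g div gcd g (m ^ g)) (gcd g (m ^ g))"
proof -
  let ?q = "g div gcd g (m ^ g)"
  have no_common_prime: False if "prime p" "p dvd ?q" "p dvd m" for p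
    using prime_dvd_imp_not_dvd_div_gcd_power[OF assms that(1,3)] that(2) by blast
  show "coprime ?q m"
    by (rule coprime_if_no_common_prime) (use no_common_prime in blast)
  show "coprime ?q (gcd g (m ^ g))"
  proof (rule coprime_if_no_common_prime)
    fix p assume "prime p" "p dvd ?q" "p dvd gcd g (m ^ g)"
    then show False using no_common_prime prime_dvd_power dvd_trans gcd_dvd2 by metis
  qed
qed

text \<open>Write \<open>g = q h\<close> with \<open>h = gcd g (m\<^sup>g)\<close>. Modulo \<open>q\<close> the integer \<open>m\<close> is invertible, and modulo
  \<open>h\<close> some multiple of \<open>r\<close> is \<open>\<equiv> gcd r h\<close>; \<open>u\<close> and \<open>v\<close> are the idempotents splitting
  \<open>\<int>/g\<close> into \<open>\<int>/h \<times> \<int>/q\<close>.\<close>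
lemma exists_square_combination:
  fixes g r m :: nat
  assumes "g > 0"
  obtains u v c c' :: int where "int g dvd u * v"
    "int g dvd int r * c * u\<^sup>2 + int m * c' * v\<^sup>2 - int (gcd r (gcd g (m ^ g)))"
proof -
  define h where "h = gcd g (m ^ g)"
  define q where "q = g div h"
  define t where "t = gcd r h"
  have g: "g = q * h" by (simp add: q_def h_def)
  have "coprime q m" "coprime q h"
    using coprime_div_gcd_power[OF assms] by (simp_all add: q_def h_def)
  then have qm: "coprime (int m) (int q)" and qh: "coprime (int q) (int h)"
    by (simp_all add: coprime_commute)
  obtain a b where ab: "a * int q + b * int h = 1"
    using bezout_int[of "int q" "int h"] qh by (auto simp: coprime_iff_gcd_eq_1)
  obtain e f where ef: "e * int m + f * int q = 1"
    using bezout_int[of "int m" "int q"] qm by (auto simp: coprime_iff_gcd_eq_1)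
  obtain x y where xy: "x * int r + y * int h = int t"
    using bezout_int[of "int r" "int h"] by (auto simp: t_def)
  define u where "u = a * int q"
  define v where "v = b * int h"
  define E where "E = int r * x * u\<^sup>2 + int m * (int t * e) * v\<^sup>2 - int t"
  have "int q dvd E"
  proof -
    have "E = int r * x * u * u + int m * int t * e * ((v - 1) * (v + 1)) + int t * (e * int m - 1)"
      by (simp add: E_def power2_eq_square algebra_simps)
    moreover have "v - 1 = - a * int q" "e * int m - 1 = - f * int q"
      using ab ef by (simp_all add: u_def v_def algebra_simps)
    ultimately show ?thesis by (simp add: u_def)
  qed
  moreover have "int h dvd E"
  proof -
    have "E = int r * x * ((u - 1) * (u + 1)) + int m * int t * e * v * v + (x * int r - int t)"
      by (simp add: E_def power2_eq_square algebra_simps)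
    moreover have "u - 1 = - b * int h" "x * int r - int t = - y * int h"
      using ab xy by (simp_all add: u_def algebra_simps)
    ultimately show ?thesis by (simp add: v_def)
  qed
  ultimately have "int g dvd E" using qh by (simp add: g divides_mult)
  moreover have "int g dvd u * v" by (simp add: u_def v_def g)
  ultimately show thesis using that[of u v x "int t * e"] by (simp add: E_def t_def h_def)
qed

section \<open>Homomorphisms onto powers\<close>

definition hom_onto_powers :: "('b, 'c) monoid_scheme \<Rightarrow> ('a, 'd) monoid_scheme \<Rightarrow> ('b \<Rightarrow> 'a) \<Rightarrow> nat \<Rightarrow> bool" where
  "hom_onto_powers B G \<chi> r \<longleftrightarrow> \<chi> \<in> hom B G \<and> (\<forall>y\<in>carrier G. \<exists>b\<in>carrier B. \<chi> b = y [^]\<^bsub>G\<^esub> r)"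

lemma (in group) subgroup_pow_card_eq_one:
  assumes "subgroup H G" "z \<in> H"
  shows "z [^] card H = \<one>"
proof -
  interpret H: group "G\<lparr>carrier := H\<rparr>" using subgroup.subgroup_is_group[OF assms(1) is_group] .
  have "z [^]\<^bsub>G\<lparr>carrier := H\<rparr>\<^esub> order (G\<lparr>carrier := H\<rparr>) = \<one>"
    using H.pow_order_eq_1 assms(2) by simp
  then show ?thesis using assms by (simp add: Coset.order_def flip: nat_pow_consistent)
qed

lemma (in group) int_pow_eq_one_if_order_dvd:
  assumes "x \<in> carrier G" "int (order G) dvd k" shows "x [^] k = \<one>"
proof -
  have "int (ord x) dvd k" using ord_dvd_group_order[OF assms(1)] assms(2) by (meson dvd_trans int_dvd_int_iff)
  then show ?thesis using int_pow_eq_id[OF assms(1)] by blast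
qed

text \<open>\<open>\<chi> (\<pi> x) = \<psi> x ^ m\<close> is well defined because \<open>m = |ker \<pi>|\<close> kills \<open>ker \<pi>\<close>.\<close>
lemma hom_onto_powers_card_kernel:
  assumes "group A" "group B" "comm_group G" "surj_hom A B \<pi>" "surj_hom A G \<psi>"
  shows "\<exists>\<chi>. hom_onto_powers B G \<chi> (card (kernel A B \<pi>))"
proof -
  interpret A: group A by fact
  interpret G: comm_group G by fact
  interpret \<pi>: group_hom A B \<pi>
    using assms(2,4) by (simp add: surj_hom_def group_hom_def group_hom_axioms_def A.is_group)
  interpret \<psi>: group_hom A G \<psi>
    using assms(5) by (simp add: surj_hom_def group_hom_def group_hom_axioms_def A.is_group G.is_group)
  let ?m = "card (kernel A B \<pi>)"
  have well_defined: "\<psi> x [^]\<^bsub>G\<^esub> ?m = \<psi> x' [^]\<^bsub>G\<^esub> ?m"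
    if x: "x \<in> carrier A" "x' \<in> carrier A" "\<pi> x = \<pi> x'" for x x'
  proof -
    define z where "z = inv\<^bsub>A\<^esub> x \<otimes>\<^bsub>A\<^esub> x'"
    have z: "z \<in> carrier A" "x' = x \<otimes>\<^bsub>A\<^esub> z" using x by (simp_all add: z_def A.m_assoc[symmetric])
    have "z \<in> kernel A B \<pi>" using x z(1) by (simp add: kernel_def z_def)
    then have "\<psi> z [^]\<^bsub>G\<^esub> ?m = \<one>\<^bsub>G\<^esub>"
      using A.subgroup_pow_card_eq_one[OF \<pi>.subgroup_kernel] z(1) by (simp flip: \<psi>.hom_nat_pow)
    then show ?thesis using x z by (simp add: G.nat_pow_distrib)
  qed
  define \<chi> where "\<chi> b = \<psi> (inv_into (carrier A) \<pi> b) [^]\<^bsub>G\<^esub> ?m" for b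
  have pre: "inv_into (carrier A) \<pi> b \<in> carrier A" "\<pi> (inv_into (carrier A) \<pi> b) = b"
    if "b \<in> carrier B" for b
    using that assms(4) by (auto simp: surj_hom_def intro: inv_into_into f_inv_into_f)
  have \<chi>_\<pi>: "\<chi> (\<pi> x) = \<psi> x [^]\<^bsub>G\<^esub> ?m" if "x \<in> carrier A" for x
    unfolding \<chi>_def using pre[of "\<pi> x"] that by (intro well_defined) simp_all
  have "\<chi> \<in> hom B G"
  proof (rule homI)
    fix b b' assume b: "b \<in> carrier B" "b' \<in> carrier B"
    let ?x = "inv_into (carrier A) \<pi> b" and ?x' = "inv_into (carrier A) \<pi> b'"
    have "\<chi> (b \<otimes>\<^bsub>B\<^esub> b') = \<chi> (\<pi> (?x \<otimes>\<^bsub>A\<^esub> ?x'))"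
      using pre b by simp
    also have "\<dots> = \<psi> (?x \<otimes>\<^bsub>A\<^esub> ?x') [^]\<^bsub>G\<^esub> ?m"
      using pre b by (intro \<chi>_\<pi>) simp
    also have "\<dots> = \<chi> b \<otimes>\<^bsub>G\<^esub> \<chi> b'"
      using pre b by (simp add: \<chi>_def G.nat_pow_distrib)
    finally show "\<chi> (b \<otimes>\<^bsub>B\<^esub> b') = \<chi> b \<otimes>\<^bsub>G\<^esub> \<chi> b'" .
  qed (simp add: \<chi>_def pre)
  moreover have "\<exists>b\<in>carrier B. \<chi> b = y [^]\<^bsub>G\<^esub> ?m" if "y \<in> carrier G" for y
  proof -
    have "y \<in> \<psi> ` carrier A" using that assms(5) by (simp add: surj_hom_def)
    then obtain x where "x \<in> carrier A" "y = \<psi> x" by blast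
    then show ?thesis using \<chi>_\<pi> by (metis \<pi>.hom_closed)
  qed
  ultimately show ?thesis unfolding hom_onto_powers_def by blast
qed

text \<open>Take \<open>\<chi> = \<chi>\<^sub>1\<^sup>u \<chi>\<^sub>2\<^sup>v\<close> with \<open>u, v\<close> as in exists_square_combination:
  the cross terms vanish because \<open>|G|\<close> divides \<open>u v\<close>.\<close>
lemma hom_onto_powers_gcd:
  assumes "group B" "comm_group G" "finite (carrier G)"
    and \<chi>1: "hom_onto_powers B G \<chi>1 r" and \<chi>2: "hom_onto_powers B G \<chi>2 m"
  shows "\<exists>\<chi>. hom_onto_powers B G \<chi> (gcd r (gcd (order G) (m ^ order G)))"
proof -
  interpret B: group B by fact
  interpret G: comm_group G by fact
  let ?g = "order G"
  let ?t = "gcd r (gcd ?g (m ^ ?g))"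
  obtain u v c c' :: int where uv: "int ?g dvd u * v"
    and t: "int ?g dvd int r * c * u\<^sup>2 + int m * c' * v\<^sup>2 - int ?t"
    using exists_square_combination[of ?g r m] assms(3) G.order_gt_0_iff_finite by blast
  have h1: "\<chi>1 \<in> hom B G" and h2: "\<chi>2 \<in> hom B G"
    using \<chi>1 \<chi>2 by (simp_all add: hom_onto_powers_def)
  interpret h1: group_hom B G \<chi>1 using h1 by (simp add: group_hom_def group_hom_axioms_def B.is_group G.is_group)
  interpret h2: group_hom B G \<chi>2 using h2 by (simp add: group_hom_def group_hom_axioms_def B.is_group G.is_group)
  define \<chi> where "\<chi> b = \<chi>1 b [^]\<^bsub>G\<^esub> u \<otimes>\<^bsub>G\<^esub> \<chi>2 b [^]\<^bsub>G\<^esub> v" for b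
  have "\<chi> \<in> hom B G"
  proof (rule homI)
    fix x y assume "x \<in> carrier B" "y \<in> carrier B"
    then show "\<chi> (x \<otimes>\<^bsub>B\<^esub> y) = \<chi> x \<otimes>\<^bsub>G\<^esub> \<chi> y"
      by (simp add: \<chi>_def G.int_pow_distrib G.m_ac)
  qed (simp add: \<chi>_def)
  moreover have "\<exists>b\<in>carrier B. \<chi> b = y [^]\<^bsub>G\<^esub> ?t" if y: "y \<in> carrier G" for y
  proof -
    obtain b1 where b1: "b1 \<in> carrier B" "\<chi>1 b1 = (y [^]\<^bsub>G\<^esub> c) [^]\<^bsub>G\<^esub> r"
      using \<chi>1 y by (auto simp: hom_onto_powers_def)
    obtain b2 where b2: "b2 \<in> carrier B" "\<chi>2 b2 = (y [^]\<^bsub>G\<^esub> c') [^]\<^bsub>G\<^esub> m"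
      using \<chi>2 y by (auto simp: hom_onto_powers_def)
    have cross: "\<chi>1 b2 [^]\<^bsub>G\<^esub> (v * u) = \<one>\<^bsub>G\<^esub>" "\<chi>2 b1 [^]\<^bsub>G\<^esub> (u * v) = \<one>\<^bsub>G\<^esub>"
      using uv b1(1) b2(1) by (simp_all add: G.int_pow_eq_one_if_order_dvd mult.commute[of v u])
    define s where "s = b1 [^]\<^bsub>B\<^esub> u \<otimes>\<^bsub>B\<^esub> b2 [^]\<^bsub>B\<^esub> v"
    have "\<chi> s = \<chi>1 b1 [^]\<^bsub>G\<^esub> (u * u) \<otimes>\<^bsub>G\<^esub> \<chi>1 b2 [^]\<^bsub>G\<^esub> (v * u) \<otimes>\<^bsub>G\<^esub>
                (\<chi>2 b1 [^]\<^bsub>G\<^esub> (u * v) \<otimes>\<^bsub>G\<^esub> \<chi>2 b2 [^]\<^bsub>G\<^esub> (v * v))"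
      using b1(1) b2(1)
      by (simp add: \<chi>_def s_def h1.hom_int_pow h2.hom_int_pow G.int_pow_distrib G.int_pow_pow)
    also have "\<dots> = \<chi>1 b1 [^]\<^bsub>G\<^esub> (u * u) \<otimes>\<^bsub>G\<^esub> \<chi>2 b2 [^]\<^bsub>G\<^esub> (v * v)"
      using cross b1(1) b2(1) by simp
    also have "\<dots> = y [^]\<^bsub>G\<^esub> (c * int r * (u * u)) \<otimes>\<^bsub>G\<^esub> y [^]\<^bsub>G\<^esub> (c' * int m * (v * v))"
      using b1(2) b2(2) y by (simp add: G.int_pow_pow flip: int_pow_int)
    also have "\<dots> = y [^]\<^bsub>G\<^esub> (int r * c * u\<^sup>2 + int m * c' * v\<^sup>2)"
      using y by (simp add: power2_eq_square mult_ac flip: G.int_pow_mult)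
    also have "\<dots> = y [^]\<^bsub>G\<^esub> int ?t \<otimes>\<^bsub>G\<^esub> y [^]\<^bsub>G\<^esub> (int r * c * u\<^sup>2 + int m * c' * v\<^sup>2 - int ?t)"
      using y by (simp flip: G.int_pow_mult)
    also have "\<dots> = y [^]\<^bsub>G\<^esub> ?t"
      using G.int_pow_eq_one_if_order_dvd[OF y t] y by (simp add: int_pow_int)
    finally show ?thesis using b1(1) b2(1) by (auto simp: s_def)
  qed
  ultimately show ?thesis unfolding hom_onto_powers_def by blast
qed

lemma surj_hom_if_hom_onto_powers_Gcd:
  fixes m :: "nat \<Rightarrow> nat"
  assumes "group B" "comm_group G" "finite (carrier G)"
    and \<chi>: "\<And>k. k < n \<Longrightarrow> \<exists>\<chi>. hom_onto_powers B G \<chi> (m k)" and coprime: "Gcd (m ` {..<n}) = 1"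
  shows "\<exists>\<chi>. surj_hom B G \<chi>"
proof -
  interpret B: group B by fact
  interpret G: comm_group G by fact
  let ?g = "order G"
  have "\<exists>\<chi> r. hom_onto_powers B G \<chi> r \<and> r > 0 \<and> (\<forall>p. prime p \<longrightarrow> p dvd r \<longrightarrow> (\<forall>j<k. p dvd m j))"
    if "k \<le> n" for k
    using that
  proof (induction k)
    case 0
    have "(\<lambda>b. \<one>\<^bsub>G\<^esub>) \<in> hom B G" by (rule homI) simp_all
    moreover have "\<exists>b\<in>carrier B. \<one>\<^bsub>G\<^esub> = y [^]\<^bsub>G\<^esub> ?g" if "y \<in> carrier G" for y
      using G.pow_order_eq_1[OF that] by (intro bexI[OF _ B.one_closed]) simp
    ultimately have "hom_onto_powers B G (\<lambda>b. \<one>\<^bsub>G\<^esub>) ?g" by (simp add: hom_onto_powers_def)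
    then show ?case using assms(3) G.order_gt_0_iff_finite by blast
  next
    case (Suc k)
    then obtain \<chi> r where IH: "hom_onto_powers B G \<chi> r" "r > 0"
      "\<forall>p. prime p \<longrightarrow> p dvd r \<longrightarrow> (\<forall>j<k. p dvd m j)" by auto
    have "k < n" using Suc(2) by simp
    then obtain \<chi>k where "hom_onto_powers B G \<chi>k (m k)" using \<chi> by blast
    then obtain \<chi>' where "hom_onto_powers B G \<chi>' (gcd r (gcd ?g (m k ^ ?g)))"
      using hom_onto_powers_gcd[OF assms(1-3) IH(1)] by blast
    moreover have "\<forall>j<Suc k. p dvd m j" if p: "prime p" "p dvd gcd r (gcd ?g (m k ^ ?g))" for p
    proof -
      have "p dvd r" "p dvd m k ^ ?g" using p(2) by simp_all
      then have "p dvd m k" "\<forall>j<k. p dvd m j" using IH(3) p(1) prime_dvd_power by auto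
      then show ?thesis using less_Suc_eq by auto
    qed
    moreover have "gcd r (gcd ?g (m k ^ ?g)) > 0" using IH(2) by simp
    ultimately show ?case by blast
  qed
  then obtain \<chi> r where \<chi>r: "hom_onto_powers B G \<chi> r" "r > 0"
    "\<forall>p. prime p \<longrightarrow> p dvd r \<longrightarrow> (\<forall>j<n. p dvd m j)" by blast
  have "r = 1"
  proof (rule ccontr)
    assume "r \<noteq> 1"
    then obtain p where p: "prime p" "p dvd r" using prime_factor_nat by blast
    then have "p dvd Gcd (m ` {..<n})" using \<chi>r(3) by (auto intro: Gcd_greatest)
    then show False using coprime p(1) by simp
  qed
  have "\<chi> ` carrier B = carrier G"
  proof
    show "\<chi> ` carrier B \<subseteq> carrier G" using \<chi>r(1) by (auto simp: hom_onto_powers_def hom_def)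
    show "carrier G \<subseteq> \<chi> ` carrier B"
    proof
      fix y assume "y \<in> carrier G"
      then obtain b where "b \<in> carrier B" "\<chi> b = y [^]\<^bsub>G\<^esub> r" using \<chi>r(1) by (auto simp: hom_onto_powers_def)
      then show "y \<in> \<chi> ` carrier B" using \<open>y \<in> carrier G\<close> \<open>r = 1\<close> by (simp add: rev_image_eqI)
    qed
  qed
  then show ?thesis using \<chi>r(1) unfolding surj_hom_def hom_onto_powers_def by blast
qed

lemma surj_hom_total_sandpile:
  assumes "n \<ge> 1" "comm_group G" "finite (carrier G)"
    and "\<And>i. i < n \<Longrightarrow> \<exists>\<psi>. surj_hom (sandpile_at n dg i) G \<psi>"
  shows "\<exists>\<chi>. surj_hom (total_sandpile n dg) G \<chi>"
proof -
  have group_S: "group (total_sandpile n dg)"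
    using comm_group_total_sandpile by (rule comm_group.axioms(2))
  have "\<exists>\<chi>. hom_onto_powers (total_sandpile n dg) G \<chi> (proj_kernel_card n dg i)" if i: "i < n" for i
  proof -
    obtain \<psi> where "surj_hom (sandpile_at n dg i) G \<psi>" using assms(4) i by blast
    with hom_onto_powers_card_kernel[OF _ group_S assms(2) surj_hom_sandpile_proj[OF i]]
    show ?thesis using comm_group_sandpile_at comm_group.axioms(2) by blast
  qed
  then show ?thesis
    using surj_hom_if_hom_onto_powers_Gcd[OF group_S assms(2,3) _ Gcd_proj_kernel_card[OF assms(1)]] by blast
qed

theorem mainTheorem6:
  fixes n :: nat and deg :: "nat \<Rightarrow> nat \<Rightarrow> nat"
  assumes "n \<ge> 1"
    and "strongly_connected n deg"
  shows "(\<forall>i<n. \<exists>h. surj_hom (sandpile_at n deg i) (total_sandpile n deg) h)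
       \<and> order (total_sandpile n deg) = Gcd ((\<lambda>i. order (sandpile_at n deg i)) ` {..<n})
       \<and> (\<forall>G :: ('a, 'b) monoid_scheme. comm_group G \<and> finite (carrier G) \<and>
            (\<forall>i<n. \<exists>h. surj_hom (sandpile_at n deg i) G h)
            \<longrightarrow> (\<exists>h. surj_hom (total_sandpile n deg) G h))"
proof (intro conjI allI impI)
  show "\<exists>h. surj_hom (sandpile_at n deg i) (total_sandpile n deg) h" if "i < n" for i
    using surj_hom_sandpile_proj[OF that] by blast
  show "order (total_sandpile n deg) = Gcd ((\<lambda>i. order (sandpile_at n deg i)) ` {..<n})"
    using Gcd_order_sandpile_at[OF assms(1)] by simp
next
  fix G :: "('a, 'b) monoid_scheme"
  assume "comm_group G \<and> finite (carrier G) \<and> (\<forall>i<n. \<exists>h. surj_hom (sandpile_at n deg i) G h)"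
  then show "\<exists>h. surj_hom (total_sandpile n deg) G h"
    using surj_hom_total_sandpile[OF assms(1)] by blast
qed

end
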